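(* Let $\epsilon,\gamma,\mu,\nu\in\mathbb R$, $\mathbf a=[\epsilon\ \gamma]^T$, $\mathbf b=[\mu\ \nu]^T$, let $\boldsymbol\psi:\mathbb R\to\mathbb R^2$, $|\boldsymbol\psi|=\|\boldsymbol\psi(x)\|_2$, and $$\mathbf M(x)=\mathbf N_1|\boldsymbol\psi|^2+\mathbf N_2|\boldsymbol\psi|^4+(2\mathbf N_1+4\mathbf N_2|\boldsymbol\psi|^2)\boldsymbol\psi\boldsymbol\psi^T,\quad \mathbf N_1=\begin{bmatrix}\epsilon&-\gamma\\ \gamma&\epsilon\end{bmatrix},\ \mathbf N_2=\begin{bmatrix}\mu&-\nu\\ \nu&\mu\end{bmatrix}.$$ Suppose that (1) $|\boldsymbol\psi(x)|>0$ for all $x\in\mathbb R$; (2) $\mathbf a$ and $\mathbf b$ are not both $\mathbf 0$; and (3) if $\mathbf a\neq\mathbf 0$, $\mathbf b\neq\mathbf 0$ and $$r_-:=\frac{-4(\epsilon\mu+\gamma\nu)-\sqrt{16(\epsilon\mu+\gamma\nu)^2-15(\epsilon^2+\gamma^2)(\mu^2+\nu^2)}}{5(\mu^2+\nu^2)}$$ is real and positive, then $\max_{x\in\mathbb R}|\boldsymbol\psi(x)|^2<r_-$. Then $\det(\mathbf M(x))>0$ for all $x\in\mathbb R$. *)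

theory Defs
  imports "HOL-Analysis.Analysis"
begin

definition rotmat :: "real \<Rightarrow> real \<Rightarrow> real^2^2" where
  "rotmat p q = vector [vector [p, - q], vector [q, p]]"

definition Mmat :: "real \<Rightarrow> real \<Rightarrow> real \<Rightarrow> real \<Rightarrow> real^2 \<Rightarrow> real^2^2" where
  "Mmat \<epsilon> \<gamma> \<mu> \<nu> v =
     (let N1 = rotmat \<epsilon> \<gamma>; N2 = rotmat \<mu> \<nu>; r = (norm v)\<^sup>2 in
      r *\<^sub>R N1 + r\<^sup>2 *\<^sub>R N2 + (2 *\<^sub>R N1 + (4 * r) *\<^sub>R N2) ** ((columnvector v :: real^1^2) ** rowvector v))"

definition discr :: "real \<Rightarrow> real \<Rightarrow> real \<Rightarrow> real \<Rightarrow> real" where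
  "discr \<epsilon> \<gamma> \<mu> \<nu> = 16 * (\<epsilon> * \<mu> + \<gamma> * \<nu>)\<^sup>2 - 15 * (\<epsilon>\<^sup>2 + \<gamma>\<^sup>2) * (\<mu>\<^sup>2 + \<nu>\<^sup>2)"

text \<open>r_minus; only meaningful (real) when discr \<ge> 0.\<close>
definition r_minus :: "real \<Rightarrow> real \<Rightarrow> real \<Rightarrow> real \<Rightarrow> real" where
  "r_minus \<epsilon> \<gamma> \<mu> \<nu> =
     (- 4 * (\<epsilon> * \<mu> + \<gamma> * \<nu>) - sqrt (discr \<epsilon> \<gamma> \<mu> \<nu>)) / (5 * (\<mu>\<^sup>2 + \<nu>\<^sup>2))"

end

theory Submission
  imports Defs "HOL-Library.Quadratic_Discriminant"
begin

text \<open>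
  The determinant factors as \<open>det M = r\<^sup>2 q(r)\<close> with \<open>r = |\<psi>|\<^sup>2 > 0\<close> and
  \<open>q(r) = 3|a|\<^sup>2 + 8 (a \<bullet> b) r + 5 |b|\<^sup>2 r\<^sup>2\<close>. If \<open>a = 0\<close> or \<open>b = 0\<close>, only one
  positive term survives. Otherwise \<open>q\<close> has positive leading and constant coefficients, so
  either it has no positive root (then \<open>q > 0\<close> on \<open>r > 0\<close>) or both roots are positive and
  the smaller one is \<open>r\<^sub>-\<close>, below which \<open>q(r) > 0\<close>.
\<close>

lemma power2_norm_vec_2: "(norm (v :: real^2))\<^sup>2 = (v$1)\<^sup>2 + (v$2)\<^sup>2"
  by (simp add: norm_eq_sqrt_inner inner_vec_def sum_2 power2_eq_square)

lemma vector_2_eq_0_iff: "(vector [x, y] = (0 :: 'a::zero^2)) \<longleftrightarrow> x = 0 \<and> y = 0"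
  by (auto simp: vec_eq_iff forall_2)

lemma det_Mmat:
  "det (Mmat \<epsilon> \<gamma> \<mu> \<nu> v) = ((norm v)\<^sup>2)\<^sup>2 *
     (3 * (\<epsilon>\<^sup>2 + \<gamma>\<^sup>2) + 8 * (norm v)\<^sup>2 * (\<epsilon> * \<mu> + \<gamma> * \<nu>) + 5 * ((norm v)\<^sup>2)\<^sup>2 * (\<mu>\<^sup>2 + \<nu>\<^sup>2))"
  unfolding Mmat_def rotmat_def Let_def power2_norm_vec_2
  by (simp add: det_2 matrix_matrix_mult_def columnvector_def rowvector_def sum_2
      power2_eq_square algebra_simps)

lemma quadratic_pos_below_smaller_root:
  fixes a b c r :: real
  assumes "a > 0" "c > 0" "r \<ge> 0"
    and below_root: "discrim a b c \<ge> 0 \<Longrightarrow> (- b - sqrt (discrim a b c)) / (2 * a) > 0 \<Longrightarrow>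
      r < (- b - sqrt (discrim a b c)) / (2 * a)"
  shows "a * r\<^sup>2 + b * r + c > 0"
proof (cases "b \<ge> 0")
  case True
  then show ?thesis
    using assms by (simp add: add_nonneg_pos)
next
  case False
  have "discrim a b c < (2 * a * r + b)\<^sup>2"
  proof (cases "discrim a b c < 0")
    case True
    then show ?thesis
      using zero_le_power2[of "2 * a * r + b"] by linarith
  next
    case False
    then have discrim_nonneg: "discrim a b c \<ge> 0"
      by simp
    have "discrim a b c < b\<^sup>2"
      using assms by (simp add: discrim_def)
    then have "sqrt (discrim a b c) < sqrt (b\<^sup>2)"
      by (rule real_sqrt_less_mono)
    then have "sqrt (discrim a b c) < - b"
      using \<open>\<not> b \<ge> 0\<close> by simp
    then have "r < (- b - sqrt (discrim a b c)) / (2 * a)"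
      using below_root discrim_nonneg \<open>a > 0\<close> by simp
    then have "sqrt (discrim a b c) < - (2 * a * r + b)"
      using \<open>a > 0\<close> by (simp add: field_simps)
    then have "(sqrt (discrim a b c))\<^sup>2 < (- (2 * a * r + b))\<^sup>2"
      using discrim_nonneg by (intro power_strict_mono) auto
    then show ?thesis
      using discrim_nonneg by (simp only: power2_minus real_sqrt_pow2)
  qed
  also have "(2 * a * r + b)\<^sup>2 - discrim a b c = 4 * a * (a * r\<^sup>2 + b * r + c)"
    by (simp add: discrim_def power2_eq_square algebra_simps)
  finally show ?thesis
    using \<open>a > 0\<close> by (simp add: zero_less_mult_iff)
qed

lemma discrim_eq_discr:
  "discrim (5 * (\<mu>\<^sup>2 + \<nu>\<^sup>2)) (8 * (\<epsilon> * \<mu> + \<gamma> * \<nu>)) (3 * (\<epsilon>\<^sup>2 + \<gamma>\<^sup>2)) = 4 * discr \<epsilon> \<gamma> \<mu> \<nu>"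
  by (simp add: discrim_def discr_def power2_eq_square algebra_simps)

lemma smaller_root_eq_r_minus:
  "(- (8 * (\<epsilon> * \<mu> + \<gamma> * \<nu>)) - sqrt (4 * discr \<epsilon> \<gamma> \<mu> \<nu>)) / (2 * (5 * (\<mu>\<^sup>2 + \<nu>\<^sup>2)))
     = r_minus \<epsilon> \<gamma> \<mu> \<nu>"
proof -
  have "sqrt (4 * discr \<epsilon> \<gamma> \<mu> \<nu>) = 2 * sqrt (discr \<epsilon> \<gamma> \<mu> \<nu>)"
    by (simp add: real_sqrt_mult)
  then have "- (8 * (\<epsilon> * \<mu> + \<gamma> * \<nu>)) - sqrt (4 * discr \<epsilon> \<gamma> \<mu> \<nu>)
      = 2 * (- 4 * (\<epsilon> * \<mu> + \<gamma> * \<nu>) - sqrt (discr \<epsilon> \<gamma> \<mu> \<nu>))"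
    by simp
  then show ?thesis
    unfolding r_minus_def by (simp only: mult_divide_mult_cancel_left_if) simp
qed

lemma det_Mmat_factor_pos:
  fixes \<epsilon> \<gamma> \<mu> \<nu> r :: real
  assumes "r > 0" and "(\<epsilon>, \<gamma>) \<noteq> (0, 0) \<or> (\<mu>, \<nu>) \<noteq> (0, 0)"
    and below_r_minus: "(\<epsilon>, \<gamma>) \<noteq> (0, 0) \<Longrightarrow> (\<mu>, \<nu>) \<noteq> (0, 0) \<Longrightarrow> discr \<epsilon> \<gamma> \<mu> \<nu> \<ge> 0 \<Longrightarrow>
      r_minus \<epsilon> \<gamma> \<mu> \<nu> > 0 \<Longrightarrow> r < r_minus \<epsilon> \<gamma> \<mu> \<nu>"
  shows "3 * (\<epsilon>\<^sup>2 + \<gamma>\<^sup>2) + 8 * r * (\<epsilon> * \<mu> + \<gamma> * \<nu>) + 5 * r\<^sup>2 * (\<mu>\<^sup>2 + \<nu>\<^sup>2) > 0"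
proof (cases "(\<epsilon>, \<gamma>) = (0, 0) \<or> (\<mu>, \<nu>) = (0, 0)")
  case True
  have "\<epsilon>\<^sup>2 + \<gamma>\<^sup>2 > 0 \<or> \<mu>\<^sup>2 + \<nu>\<^sup>2 > 0"
    using assms(2) by (auto simp: sum_power2_gt_zero_iff)
  with True show ?thesis
    using \<open>r > 0\<close> by auto
next
  case False
  let ?a = "5 * (\<mu>\<^sup>2 + \<nu>\<^sup>2)" and ?b = "8 * (\<epsilon> * \<mu> + \<gamma> * \<nu>)" and ?c = "3 * (\<epsilon>\<^sup>2 + \<gamma>\<^sup>2)"
  have "?a * r\<^sup>2 + ?b * r + ?c > 0"
  proof (rule quadratic_pos_below_smaller_root)
    have "\<mu>\<^sup>2 + \<nu>\<^sup>2 > 0" "\<epsilon>\<^sup>2 + \<gamma>\<^sup>2 > 0"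
      using False by (auto simp: sum_power2_gt_zero_iff)
    then show "?a > 0" "?c > 0"
      by simp_all
    show "r < (- ?b - sqrt (discrim ?a ?b ?c)) / (2 * ?a)"
      if "discrim ?a ?b ?c \<ge> 0" and "(- ?b - sqrt (discrim ?a ?b ?c)) / (2 * ?a) > 0"
      using that below_r_minus False
      unfolding discrim_eq_discr smaller_root_eq_r_minus by simp
  qed (use \<open>r > 0\<close> in simp)
  then show ?thesis
    by (simp add: algebra_simps)
qed

theorem proposition7p7:
  fixes \<epsilon> \<gamma> \<mu> \<nu> :: real and \<psi> :: "real \<Rightarrow> real^2"
  assumes pos: "\<forall>x. norm (\<psi> x) > 0"
    and notboth: "\<not> (vector [\<epsilon>, \<gamma>] = (0::real^2) \<and> vector [\<mu>, \<nu>] = (0::real^2))"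
    and maxcond: "vector [\<epsilon>, \<gamma>] \<noteq> (0::real^2) \<and> vector [\<mu>, \<nu>] \<noteq> (0::real^2)
         \<and> discr \<epsilon> \<gamma> \<mu> \<nu> \<ge> 0 \<and> r_minus \<epsilon> \<gamma> \<mu> \<nu> > 0
       \<longrightarrow> (\<exists>x0. (\<forall>x. (norm (\<psi> x))\<^sup>2 \<le> (norm (\<psi> x0))\<^sup>2)
                  \<and> (norm (\<psi> x0))\<^sup>2 < r_minus \<epsilon> \<gamma> \<mu> \<nu>)"
  shows "\<forall>x. det (Mmat \<epsilon> \<gamma> \<mu> \<nu> (\<psi> x)) > 0"
proof
  fix x
  have r_pos: "(norm (\<psi> x))\<^sup>2 > 0"
    using pos by simp
  have "3 * (\<epsilon>\<^sup>2 + \<gamma>\<^sup>2) + 8 * (norm (\<psi> x))\<^sup>2 * (\<epsilon> * \<mu> + \<gamma> * \<nu>)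
      + 5 * ((norm (\<psi> x))\<^sup>2)\<^sup>2 * (\<mu>\<^sup>2 + \<nu>\<^sup>2) > 0"
  proof (rule det_Mmat_factor_pos[OF r_pos])
    show "(\<epsilon>, \<gamma>) \<noteq> (0, 0) \<or> (\<mu>, \<nu>) \<noteq> (0, 0)"
      using notboth by (simp add: vector_2_eq_0_iff)
    show "(norm (\<psi> x))\<^sup>2 < r_minus \<epsilon> \<gamma> \<mu> \<nu>"
      if "(\<epsilon>, \<gamma>) \<noteq> (0, 0)" "(\<mu>, \<nu>) \<noteq> (0, 0)" "discr \<epsilon> \<gamma> \<mu> \<nu> \<ge> 0" "r_minus \<epsilon> \<gamma> \<mu> \<nu> > 0"
    proof -
      have "vector [\<epsilon>, \<gamma>] \<noteq> (0::real^2) \<and> vector [\<mu>, \<nu>] \<noteq> (0::real^2)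
          \<and> discr \<epsilon> \<gamma> \<mu> \<nu> \<ge> 0 \<and> r_minus \<epsilon> \<gamma> \<mu> \<nu> > 0"
        using that by (simp add: vector_2_eq_0_iff)
      then obtain x0 where "(norm (\<psi> x))\<^sup>2 \<le> (norm (\<psi> x0))\<^sup>2" "(norm (\<psi> x0))\<^sup>2 < r_minus \<epsilon> \<gamma> \<mu> \<nu>"
        using maxcond by blast
      then show ?thesis
        by (rule order.strict_trans1)
    qed
  qed
  then show "det (Mmat \<epsilon> \<gamma> \<mu> \<nu> (\<psi> x)) > 0"
    unfolding det_Mmat using r_pos by simp
qed

end
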